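(* Let $1\le k\le s<r$, $G=\mathrm{Sp}(2r)$, $M=C_G(\tau)\cong\mathrm{Sp}(2s)\times\mathrm{Sp}(2(r-s))$, $P\supseteq B$ the maximal parabolic of $G$ with $G/P\cong\mathrm{IG}(k,2r)$, and $Q=M\cap P$ (so $M/Q\cong\mathrm{IG}(k,2s)$). Then the inclusion $W_M\subseteq W$ induces an inclusion $W_M^Q\subseteq W^P$.
   Context: $V=\mathbb{C}^{2r}$ with ordered basis $e_1,\ldots,e_r,e_r',\ldots,e_1'$ and symplectic form with $(e_i,e_j')=\delta_{ij}$, $(e_i,e_j)=(e_i',e_j')=0$; $G=\mathrm{Sp}(V)$, $T$ the diagonal torus $\mathrm{diag}(a_1,\ldots,a_r,a_r^{-1},\ldots,a_1^{-1})$, $\epsilon_i$ the character giving $a_i$; $B$ the Borel with positive roots $\epsilon_i-\epsilon_j$ ($i<j$), $\epsilon_i+\epsilon_j$ ($i\le j$), simple roots $\alpha_i=\epsilon_i-\epsilon_{i+1}$ ($i<r$), $\alpha_r=2\epsilon_r$. $P$ is the maximal parabolic associated to omitting $\alpha_k$. $\tau=\mathrm{diag}(-1,\ldots,-1,1,\ldots,1,-1,\ldots,-1)\in T$ with $2(r-s)$ entries equal to $1$, $M=C_G(\tau)$, whose roots are the roots $\alpha$ of $G$ with $\alpha(\tau)=1$; its simple roots are $\alpha_1,\ldots,\alpha_{s-1},2\alpha_s+\cdots+2\alpha_{r-1}+\alpha_r$ (first factor) and $\alpha_{s+1},\ldots,\alpha_r$ (second factor). $W^P$ (resp. $W_M^Q$)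 denotes the set of minimal length representatives of $W/W_P$ (resp. $W_M/W_Q$), length in $W_M$ measured with respect to the simple reflections of $M$. *)

theory Defs
  imports Main
begin

text \<open>Weyl group of Sp(2r) acting on the index set {+-1,...,+-r} (index -i stands for -eps_i).
  An element w acts by w(eps_i) = eps_(w i), with eps_(-i) = -eps_i.\<close>

definition refl_short :: "int \<Rightarrow> int \<Rightarrow> int \<Rightarrow> int" where
  "refl_short a b = (\<lambda>x. if x = a then b else if x = b then a
                        else if x = -a then -b else if x = -b then -a else x)"

definition refl_long :: "int \<Rightarrow> int \<Rightarrow> int" where
  "refl_long a = (\<lambda>x. if x = a then -a else if x = -a then a else x)"

text \<open>Simple reflection s_i of G = Sp(2r), i = 1..r: alpha_i = eps_i - eps_(i+1) (i<r), alpha_r = 2 eps_r.\<close>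
definition sref :: "nat \<Rightarrow> nat \<Rightarrow> int \<Rightarrow> int" where
  "sref r i = (if i < r then refl_short (int i) (int i + 1) else refl_long (int r))"

definition word_prod :: "('a \<Rightarrow> 'a) list \<Rightarrow> 'a \<Rightarrow> 'a" where
  "word_prod ws = foldr (\<circ>) ws id"

definition gen_group :: "('a \<Rightarrow> 'a) set \<Rightarrow> ('a \<Rightarrow> 'a) set" where
  "gen_group S = {word_prod ws | ws. set ws \<subseteq> S}"

definition word_length :: "('a \<Rightarrow> 'a) set \<Rightarrow> ('a \<Rightarrow> 'a) \<Rightarrow> nat" where
  "word_length S w = (LEAST n. \<exists>ws. set ws \<subseteq> S \<and> length ws = n \<and> word_prod ws = w)"

definition min_reps :: "(('a \<Rightarrow> 'a) \<Rightarrow> nat) \<Rightarrow> ('a \<Rightarrow> 'a) set \<Rightarrow> ('a \<Rightarrow> 'a) set \<Rightarrow> ('a \<Rightarrow> 'a) set" where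
  "min_reps len W K = {w \<in> W. \<forall>u \<in> K. len w \<le> len (w \<circ> u)}"

definition simple_G :: "nat \<Rightarrow> (int \<Rightarrow> int) set" where
  "simple_G r = sref r ` {1..r}"

definition simple_P :: "nat \<Rightarrow> nat \<Rightarrow> (int \<Rightarrow> int) set" where
  "simple_P r k = sref r ` ({1..r} - {k})"

text \<open>Simple roots of M: alpha_1..alpha_(s-1), 2 eps_s (= 2alpha_s+...+2alpha_(r-1)+alpha_r),
  and alpha_(s+1),...,alpha_r.\<close>
definition simple_M :: "nat \<Rightarrow> nat \<Rightarrow> (int \<Rightarrow> int) set" where
  "simple_M r s = (\<lambda>i. refl_short (int i) (int i + 1)) ` {1..<s}
                 \<union> {refl_long (int s)}
                 \<union> sref r ` {s+1..r}"

definition W_G :: "nat \<Rightarrow> (int \<Rightarrow> int) set" where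
  "W_G r = gen_group (simple_G r)"

definition W_P :: "nat \<Rightarrow> nat \<Rightarrow> (int \<Rightarrow> int) set" where
  "W_P r k = gen_group (simple_P r k)"

definition W_M :: "nat \<Rightarrow> nat \<Rightarrow> (int \<Rightarrow> int) set" where
  "W_M r s = gen_group (simple_M r s)"

text \<open>Q = M \<inter> P, so W_Q = W_M \<inter> W_P.\<close>
definition W_Q :: "nat \<Rightarrow> nat \<Rightarrow> nat \<Rightarrow> (int \<Rightarrow> int) set" where
  "W_Q r s k = W_M r s \<inter> W_P r k"

definition WP_reps :: "nat \<Rightarrow> nat \<Rightarrow> (int \<Rightarrow> int) set" where
  "WP_reps r k = min_reps (word_length (simple_G r)) (W_G r) (W_P r k)"

definition WMQ_reps :: "nat \<Rightarrow> nat \<Rightarrow> nat \<Rightarrow> (int \<Rightarrow> int) set" where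
  "WMQ_reps r s k = min_reps (word_length (simple_M r s)) (W_M r s) (W_Q r s k)"

end

theory Submission
  imports Defs
begin

text \<open>Realise \<open>W\<close> as the signed permutations of \<open>{\<plusminus>1, \<dots>, \<plusminus>r}\<close> and \<open>W\<^sub>M\<close> as those preserving the
  blocks \<open>\<bar>x\<bar> \<le> s\<close> and \<open>\<bar>x\<bar> > s\<close>. In both groups the word length in the simple reflections is half
  of an explicit inversion count: each simple reflection changes the count by exactly \<open>\<plusminus>2\<close>, and only
  the identity has no descent. A minimal representative \<open>w\<close> of \<open>W\<^sub>M/W\<^sub>Q\<close> has no descent at the simple
  reflections of \<open>M\<close> lying in \<open>W\<^sub>P\<close> (for \<open>k < s\<close> this includes the reflection in \<open>2\<epsilon>\<^sub>s\<close>, which is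
  conjugate in \<open>W\<^sub>P\<close> to the one in \<open>2\<epsilon>\<^sub>r\<close>). So \<open>w\<close> is increasing on \<open>1, \<dots>, k\<close> and positive and
  increasing on \<open>k + 1, \<dots>, r\<close>. Hence \<open>w\<close> sends the positive roots of the Levi factor of \<open>P\<close> to
  positive roots, the inversion count of \<open>W\<close> is additive on \<open>w W\<^sub>P\<close>, and \<open>w\<close> is a minimal
  representative of \<open>W/W\<^sub>P\<close>.\<close>

lemma word_prod_append: "word_prod (xs @ ys) = word_prod xs \<circ> word_prod ys"
  by (induction xs) (auto simp: word_prod_def)

lemma word_prod_snoc: "word_prod (xs @ [t]) = word_prod xs \<circ> t"
  unfolding word_prod_append by (simp add: word_prod_def)

lemma gen_group_comp: "u \<in> gen_group S \<Longrightarrow> v \<in> gen_group S \<Longrightarrow> u \<circ> v \<in> gen_group S"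
proof -
  assume "u \<in> gen_group S" "v \<in> gen_group S"
  then obtain us vs where "set us \<subseteq> S" "set vs \<subseteq> S" "u = word_prod us" "v = word_prod vs"
    unfolding gen_group_def by blast
  then show ?thesis
    unfolding gen_group_def by (auto intro!: exI[of _ "us @ vs"] simp: word_prod_append)
qed

lemma gen_group_gen: "t \<in> S \<Longrightarrow> t \<in> gen_group S"
  unfolding gen_group_def by (auto intro!: exI[of _ "[t]"] simp: word_prod_def)

lemma gen_group_mono: "A \<subseteq> B \<Longrightarrow> gen_group A \<subseteq> gen_group B"
  unfolding gen_group_def by auto

lemma word_length_eqI:
  assumes "set ws \<subseteq> S" "word_prod ws = w"
    and "\<And>vs. set vs \<subseteq> S \<Longrightarrow> word_prod vs = w \<Longrightarrow> length ws \<le> length vs"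
  shows "word_length S w = length ws"
  unfolding word_length_def
proof (rule Least_equality)
  show "\<exists>vs. set vs \<subseteq> S \<and> length vs = length ws \<and> word_prod vs = w" using assms(1,2) by blast
qed (use assms(3) in blast)

definition signed_range :: "nat \<Rightarrow> int set" where
  "signed_range r = {x. x \<noteq> 0 \<and> \<bar>x\<bar> \<le> int r}"

definition same_block :: "nat \<Rightarrow> int \<Rightarrow> int \<Rightarrow> bool" where
  "same_block s x y \<longleftrightarrow> (\<bar>x\<bar> \<le> int s \<longleftrightarrow> \<bar>y\<bar> \<le> int s)"

text \<open>With \<open>\<epsilon>\<^sub>-\<^sub>i = -\<epsilon>\<^sub>i\<close>, the root \<open>\<epsilon>\<^sub>x - \<epsilon>\<^sub>y\<close> (\<open>x \<noteq> \<plusminus>y\<close>) is positive iff \<open>pos_root x y\<close>,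
  and \<open>2\<epsilon>\<^sub>x\<close> is positive iff \<open>pos_root x (-x)\<close>: it is the linear order
  \<open>1 < \<dots> < r < -r < \<dots> < -1\<close> on nonzero integers.\<close>
definition pos_root :: "int \<Rightarrow> int \<Rightarrow> bool" where
  "pos_root x y \<longleftrightarrow> (0 < x \<and> (y < 0 \<or> x < y)) \<or> (x < 0 \<and> y < 0 \<and> x < y)"

lemma finite_signed_range: "finite (signed_range r)"
  by (rule finite_subset[of _ "{- int r..int r}"]) (auto simp: signed_range_def)

lemma pos_root_trans: "pos_root x y \<Longrightarrow> pos_root y z \<Longrightarrow> pos_root x z"
  and pos_root_asym: "pos_root x y \<Longrightarrow> \<not> pos_root y x"
  and pos_root_irrefl: "\<not> pos_root x x"
  and pos_root_total: "x \<noteq> 0 \<Longrightarrow> y \<noteq> 0 \<Longrightarrow> x \<noteq> y \<Longrightarrow> pos_root x y \<or> pos_root y x"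
  and pos_root_uminus: "pos_root (-x) (-y) \<longleftrightarrow> pos_root y x"
  and pos_root_uminus_right: "pos_root x (-x) \<longleftrightarrow> 0 < x"
  and pos_root_positive: "pos_root x y \<Longrightarrow> 0 < y \<Longrightarrow> 0 < x \<and> x < y"
  by (auto simp: pos_root_def)

lemma pos_root_chain:
  assumes "\<And>i. lo \<le> i \<Longrightarrow> i < hi \<Longrightarrow> pos_root (f i) (f (i + 1))"
    and "lo \<le> i" "i < j" "j \<le> hi"
  shows "pos_root (f i) (f (j :: int))"
  using \<open>i < j\<close> \<open>j \<le> hi\<close>
proof (induction j rule: int_gr_induct)
  case base
  then show ?case using assms(1,2) by simp
next
  case (step j)
  then show ?case using assms(1,2) pos_root_trans by force
qed

lemma pos_root_chain_increasing:
  assumes "\<And>i. lo \<le> i \<Longrightarrow> i < hi \<Longrightarrow> pos_root (f i) (f (i + 1))" and "0 < f hi"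
    and "lo \<le> i" "i < j" "j \<le> hi"
  shows "0 < f i \<and> f i < f (j :: int)"
proof -
  have "0 < f j"
    using assms pos_root_chain[of lo hi f j hi] pos_root_positive by (cases "j = hi") auto
  then show ?thesis using pos_root_chain[of lo hi f i j] assms pos_root_positive by blast
qed

lemma increasing_self_map_eq_id:
  assumes mono: "\<And>i j. lo \<le> i \<Longrightarrow> i < j \<Longrightarrow> j \<le> hi \<Longrightarrow> f i < f j"
    and maps: "\<And>i. lo \<le> i \<Longrightarrow> i \<le> hi \<Longrightarrow> lo \<le> f i \<and> f i \<le> hi"
    and "lo \<le> i" "i \<le> hi"
  shows "f i = (i :: int)"
proof -
  have "i \<le> f i" using \<open>lo \<le> i\<close> \<open>i \<le> hi\<close>
  proof (induction i rule: int_ge_induct)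
    case base
    then show ?case using maps by simp
  next
    case (step i)
    then show ?case using mono[of i "i + 1"] by simp
  qed
  moreover have "f i \<le> i" using \<open>i \<le> hi\<close> \<open>lo \<le> i\<close>
  proof (induction i rule: int_le_induct)
    case base
    then show ?case using maps by simp
  next
    case (step i)
    then show ?case using mono[of "i - 1" i] by simp
  qed
  ultimately show ?thesis by simp
qed

text \<open>The Weyl group of \<open>M \<cong> Sp(2s) \<times> Sp(2(r - s))\<close>; for \<open>s = 0\<close> it is \<open>W\<close> itself.\<close>
definition block_signed_perm :: "nat \<Rightarrow> nat \<Rightarrow> (int \<Rightarrow> int) \<Rightarrow> bool" where
  "block_signed_perm r s w \<longleftrightarrow> (\<forall>x. w (- x) = - w x) \<and> bij_betw w (signed_range r) (signed_range r)
     \<and> (\<forall>x. x \<notin> signed_range r \<longrightarrow> w x = x) \<and> (\<forall>x \<in> signed_range r. same_block s (w x) x)"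

lemma block_signed_permD:
  assumes "block_signed_perm r s w"
  shows block_signed_perm_uminus: "w (- x) = - w x"
    and block_signed_perm_in_range: "x \<in> signed_range r \<Longrightarrow> w x \<in> signed_range r"
    and block_signed_perm_inj: "x \<in> signed_range r \<Longrightarrow> y \<in> signed_range r \<Longrightarrow> w x = w y \<Longrightarrow> x = y"
    and block_signed_perm_same_block: "x \<in> signed_range r \<Longrightarrow> same_block s (w x) x"
    and block_signed_perm_fixes: "x \<notin> signed_range r \<Longrightarrow> w x = x"
  using assms unfolding block_signed_perm_def bij_betw_def inj_on_def by auto

lemma block_signed_perm_id: "block_signed_perm r s id"
  by (auto simp: block_signed_perm_def same_block_def)

lemma block_signed_perm_comp:
  assumes "block_signed_perm r s f" "block_signed_perm r s g"
  shows "block_signed_perm r s (f \<circ> g)"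
  using assms bij_betw_trans[of g "signed_range r" "signed_range r" f "signed_range r"]
  unfolding block_signed_perm_def same_block_def by (auto simp: bij_betw_apply)

lemma block_signed_perm_no_blocks: "block_signed_perm r s w \<Longrightarrow> block_signed_perm r 0 w"
  using block_signed_perm_in_range[of r s w]
  by (auto simp: block_signed_perm_def same_block_def signed_range_def)

lemma block_signed_perm_pos_root_total:
  assumes "block_signed_perm r s w" "x \<in> signed_range r" "y \<in> signed_range r" "x \<noteq> y"
  shows "pos_root (w x) (w y) \<or> pos_root (w y) (w x)"
proof (rule pos_root_total)
  show "w x \<noteq> 0" "w y \<noteq> 0"
    using block_signed_perm_in_range[OF assms(1)] assms(2,3) by (auto simp: signed_range_def)
  show "w x \<noteq> w y" using block_signed_perm_inj[OF assms(1,2,3)] assms(4) by blast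
qed

lemma block_signed_permI_involution:
  assumes "\<And>x. t (- x) = - t x" "\<And>x. t (t x) = x" "\<And>x. t x \<in> signed_range r \<longleftrightarrow> x \<in> signed_range r"
    and "\<And>x. x \<notin> signed_range r \<Longrightarrow> t x = x" "\<And>x. same_block s (t x) x"
  shows "block_signed_perm r s t"
  unfolding block_signed_perm_def using assms by (auto intro!: bij_betw_byWitness[of _ t])

lemma refl_short_simps:
  assumes "1 \<le> a"
  shows "refl_short a (a + 1) a = a + 1" "refl_short a (a + 1) (a + 1) = a"
    "refl_short a (a + 1) (- a) = - (a + 1)" "refl_short a (a + 1) (- (a + 1)) = - a"
    "x \<notin> {a, a + 1, - a, - (a + 1)} \<Longrightarrow> refl_short a (a + 1) x = x"
  using assms by (auto simp: refl_short_def)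

lemma refl_long_simps:
  assumes "1 \<le> a"
  shows "refl_long a a = - a" "refl_long a (- a) = a" "x \<notin> {a, - a} \<Longrightarrow> refl_long a x = x"
  using assms by (auto simp: refl_long_def)

lemma refl_short_involution: "1 \<le> a \<Longrightarrow> refl_short a (a + 1) \<circ> refl_short a (a + 1) = id"
  by (auto simp: refl_short_def)

lemma refl_long_involution: "refl_long a \<circ> refl_long a = id"
  by (auto simp: refl_long_def)

lemma block_signed_perm_refl_short:
  assumes "1 \<le> a" "a + 1 \<le> int r" "same_block s a (a + 1)"
  shows "block_signed_perm r s (refl_short a (a + 1))"
  by (rule block_signed_permI_involution)
    (use assms in \<open>auto simp: refl_short_def signed_range_def same_block_def\<close>)

lemma block_signed_perm_refl_long:
  assumes "1 \<le> a" "a \<le> int r"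
  shows "block_signed_perm r s (refl_long a)"
  by (rule block_signed_permI_involution)
    (use assms in \<open>auto simp: refl_long_def signed_range_def same_block_def\<close>)

lemma pos_root_refl_short:
  assumes "1 \<le> a" "x \<noteq> 0" "y \<noteq> 0" "(x, y) \<notin> {(a, a + 1), (a + 1, a), (- a, - (a + 1)), (- (a + 1), - a)}"
  shows "pos_root (refl_short a (a + 1) x) (refl_short a (a + 1) y) \<longleftrightarrow> pos_root x y"
  using assms unfolding refl_short_def pos_root_def by simp smt

lemma pos_root_refl_long:
  assumes "1 \<le> a" "x \<noteq> 0" "y \<noteq> 0" "(x, y) \<notin> {(a, - a), (- a, a)}"
    and "\<bar>x\<bar> = a \<Longrightarrow> \<bar>y\<bar> \<le> a" "\<bar>y\<bar> = a \<Longrightarrow> \<bar>x\<bar> \<le> a"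
  shows "pos_root (refl_long a x) (refl_long a y) \<longleftrightarrow> pos_root x y"
  using assms unfolding refl_long_def pos_root_def by simp smt

text \<open>Twice the number of positive roots of \<open>M\<close> made negative by \<open>w\<close>: a short root
  \<open>\<epsilon>\<^sub>x - \<epsilon>\<^sub>y\<close> is counted by the pairs \<open>(x, y)\<close> and \<open>(-y, -x)\<close>, a long root \<open>2\<epsilon>\<^sub>x\<close> by the pair
  \<open>(x, -x)\<close> and by the sign change at \<open>x\<close>.\<close>
definition inversion_pairs :: "nat \<Rightarrow> nat \<Rightarrow> (int \<Rightarrow> int) \<Rightarrow> (int \<times> int) set" where
  "inversion_pairs r s w = {(x, y). x \<in> signed_range r \<and> y \<in> signed_range r \<and> same_block s x y
     \<and> pos_root x y \<and> pos_root (w y) (w x)}"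

definition sign_changes :: "nat \<Rightarrow> (int \<Rightarrow> int) \<Rightarrow> int set" where
  "sign_changes r w = {x \<in> signed_range r. 0 < x \<and> w x < 0}"

definition inversion_count :: "nat \<Rightarrow> nat \<Rightarrow> (int \<Rightarrow> int) \<Rightarrow> nat" where
  "inversion_count r s w = card (inversion_pairs r s w) + card (sign_changes r w)"

lemma finite_inversion_pairs: "finite (inversion_pairs r s w)"
  by (rule finite_subset[of _ "signed_range r \<times> signed_range r"])
    (auto simp: inversion_pairs_def finite_signed_range)

lemma finite_sign_changes: "finite (sign_changes r w)"
  by (rule finite_subset[of _ "signed_range r"]) (auto simp: sign_changes_def finite_signed_range)

lemma inversion_count_id: "inversion_count r s id = 0"
proof -
  have "inversion_pairs r s id = {}" "sign_changes r id = {}"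
    using pos_root_asym by (auto simp: inversion_pairs_def sign_changes_def)
  then show ?thesis by (simp add: inversion_count_def)
qed

lemma card_inversion_pairs_comp_involution:
  assumes "\<And>x. t (t x) = x" "\<And>x. t x \<in> signed_range r \<longleftrightarrow> x \<in> signed_range r"
    and "\<And>x y. same_block s (t x) (t y) \<longleftrightarrow> same_block s x y"
  shows "card (inversion_pairs r s (w \<circ> t)) = card {(x, y). x \<in> signed_range r \<and> y \<in> signed_range r
           \<and> same_block s x y \<and> pos_root (t x) (t y) \<and> pos_root (w y) (w x)}"
  by (rule bij_betw_same_card[of "map_prod t t"], rule bij_betw_byWitness[of _ "map_prod t t"])
    (use assms in \<open>auto simp: inversion_pairs_def\<close>)

lemma inversion_count_comp_refl_short:
  assumes w: "block_signed_perm r s w" and a: "1 \<le> a" "a + 1 \<le> int r" "same_block s a (a + 1)"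
  shows "int (inversion_count r s (w \<circ> refl_short a (a + 1)))
           = int (inversion_count r s w) + (if pos_root (w a) (w (a + 1)) then 2 else - 2)"
proof -
  define t where "t = refl_short a (a + 1)"
  define A where "A = {(a, a + 1), (a + 1, a), (- a, - (a + 1)), (- (a + 1), - a)}"
  define G where "G = {(x, y). x \<in> signed_range r \<and> y \<in> signed_range r \<and> same_block s x y
                        \<and> pos_root (t x) (t y) \<and> pos_root (w y) (w x)}"
  let ?F = "inversion_pairs r s w"
  have card_F_comp: "card (inversion_pairs r s (w \<circ> t)) = card G"
    unfolding G_def by (rule card_inversion_pairs_comp_involution)
      (use a in \<open>auto simp: t_def refl_short_def signed_range_def same_block_def\<close>)
  have "finite G"
    by (rule finite_subset[of _ "signed_range r \<times> signed_range r"]) (auto simp: G_def finite_signed_range)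
  moreover have "G - A = ?F - A"
    using pos_root_refl_short[OF a(1)]
    unfolding G_def inversion_pairs_def A_def t_def signed_range_def by auto
  ultimately have card_G: "card G = card (G \<inter> A) + card (?F - A)"
    using card_Int_Diff[of G A] by simp
  have range: "a \<in> signed_range r" "a + 1 \<in> signed_range r" using a by (auto simp: signed_range_def)
  have w_uminus: "w (- a) = - w a" "w (- (a + 1)) = - w (a + 1)"
    using block_signed_perm_uminus[OF w, of a] block_signed_perm_uminus[OF w, of "a + 1"] by simp_all
  have total: "pos_root (w a) (w (a + 1)) \<or> pos_root (w (a + 1)) (w a)"
    using block_signed_perm_pos_root_total[OF w range] by simp
  have blocks: "same_block s (a + 1) a" "same_block s (- a) (- (a + 1))" "same_block s (- (a + 1)) (- a)"
    using a(3) by (auto simp: same_block_def)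
  have order: "pos_root a (a + 1)" "pos_root (- (a + 1)) (- a)"
    "\<not> pos_root (a + 1) a" "\<not> pos_root (- a) (- (a + 1))"
    using a(1) by (auto simp: pos_root_def)
  have range': "- a \<in> signed_range r" "- (a + 1) \<in> signed_range r" using range by (auto simp: signed_range_def)
  have uminus: "pos_root (- w (a + 1)) (- w a) \<longleftrightarrow> pos_root (w a) (w (a + 1))"
    "pos_root (- w a) (- w (a + 1)) \<longleftrightarrow> pos_root (w (a + 1)) (w a)"
    by (simp_all add: pos_root_uminus)
  note asym = pos_root_asym[of "w a" "w (a + 1)"] pos_root_asym[of "w (a + 1)" "w a"]
  have "G \<inter> A = (if pos_root (w a) (w (a + 1)) then {(a + 1, a), (- a, - (a + 1))} else {})"
    unfolding G_def A_def using range range' w_uminus a(3) blocks order uminus asym total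
      refl_short_simps(1-4)[OF a(1), folded t_def]
    by (auto simp: pos_root_irrefl)
  moreover have "?F \<inter> A = (if pos_root (w a) (w (a + 1)) then {} else {(a, a + 1), (- (a + 1), - a)})"
    unfolding inversion_pairs_def A_def using range range' w_uminus a(3) blocks order uminus asym total
    by (auto simp: pos_root_irrefl)
  moreover have "card {(a + 1, a), (- a, - (a + 1))} = 2" "card {(a, a + 1), (- (a + 1), - a)} = 2"
    using a(1) by auto
  moreover have "card (sign_changes r (w \<circ> t)) = card (sign_changes r w)"
  proof (rule bij_betw_same_card[of t], rule bij_betw_byWitness[of _ t])
  qed (use a in \<open>auto simp: sign_changes_def t_def refl_short_def signed_range_def\<close>)
  ultimately show ?thesis
    using card_F_comp card_G card_Int_Diff[OF finite_inversion_pairs, of r s w A]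
    unfolding inversion_count_def t_def by auto
qed

lemma inversion_count_comp_refl_long:
  assumes w: "block_signed_perm r s w" and a: "1 \<le> a" "a \<le> int r" "a \<in> {int s, int r}"
  shows "int (inversion_count r s (w \<circ> refl_long a))
           = int (inversion_count r s w) + (if 0 < w a then 2 else - 2)"
proof -
  define t where "t = refl_long a"
  define A where "A = {(a, - a), (- a, a)}"
  define G where "G = {(x, y). x \<in> signed_range r \<and> y \<in> signed_range r \<and> same_block s x y
                        \<and> pos_root (t x) (t y) \<and> pos_root (w y) (w x)}"
  let ?F = "inversion_pairs r s w" and ?L = "sign_changes r w" and ?L' = "sign_changes r (w \<circ> t)"
  have card_F_comp: "card (inversion_pairs r s (w \<circ> t)) = card G"
    unfolding G_def by (rule card_inversion_pairs_comp_involution)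
      (use a in \<open>auto simp: t_def refl_long_def signed_range_def same_block_def\<close>)
  have "finite G"
    by (rule finite_subset[of _ "signed_range r \<times> signed_range r"]) (auto simp: G_def finite_signed_range)
  moreover have "G - A = ?F - A"
  proof -
    have "pos_root (t x) (t y) \<longleftrightarrow> pos_root x y"
      if "x \<in> signed_range r" "y \<in> signed_range r" "same_block s x y" "(x, y) \<notin> A" for x y
      unfolding t_def by (rule pos_root_refl_long)
        (use a that in \<open>auto simp: signed_range_def same_block_def A_def\<close>)
    then show ?thesis unfolding G_def inversion_pairs_def by auto
  qed
  ultimately have card_G: "card G = card (G \<inter> A) + card (?F - A)"
    using card_Int_Diff[of G A] by simp
  have range: "a \<in> signed_range r" "- a \<in> signed_range r" using a by (auto simp: signed_range_def)
  have w_uminus: "w (- a) = - w a" using block_signed_perm_uminus[OF w] .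
  have "w a \<noteq> 0" using block_signed_perm_in_range[OF w range(1)] by (auto simp: signed_range_def)
  have blocks: "same_block s a (- a)" "same_block s (- a) a" by (auto simp: same_block_def)
  have order: "pos_root a (- a)" "\<not> pos_root (- a) a" using a(1) by (auto simp: pos_root_def)
  have "G \<inter> A = (if 0 < w a then {(- a, a)} else {})"
    using range w_uminus blocks order refl_long_simps[OF a(1)]
    unfolding G_def A_def t_def by (auto simp: pos_root_uminus_right pos_root_def)
  moreover have "?F \<inter> A = (if 0 < w a then {} else {(a, - a)})"
    using range w_uminus blocks order \<open>w a \<noteq> 0\<close>
    unfolding inversion_pairs_def A_def by (auto simp: pos_root_def)
  moreover have "?L' - {a} = ?L - {a}"
    using a(1) by (auto simp: sign_changes_def t_def refl_long_def)
  moreover have "?L' \<inter> {a} = (if 0 < w a then {a} else {})" "?L \<inter> {a} = (if 0 < w a then {} else {a})"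
    using range w_uminus \<open>w a \<noteq> 0\<close> a(1) refl_long_simps[OF a(1)]
    by (auto simp: sign_changes_def t_def)
  ultimately show ?thesis
    using card_F_comp card_G card_Int_Diff[OF finite_inversion_pairs, of r s w A]
      card_Int_Diff[OF finite_sign_changes, of r w "{a}"] card_Int_Diff[OF finite_sign_changes, of r "w \<circ> t" "{a}"]
    unfolding inversion_count_def t_def by auto
qed

definition simple_refls :: "nat \<Rightarrow> nat \<Rightarrow> (int \<Rightarrow> int) set" where
  "simple_refls r s = {refl_short a (a + 1) | a. 1 \<le> a \<and> a + 1 \<le> int r \<and> same_block s a (a + 1)}
                    \<union> {refl_long a | a. 1 \<le> a \<and> a \<in> {int s, int r}}"

lemma inversion_count_comp_simple_refl:
  assumes "block_signed_perm r s w" "t \<in> simple_refls r s" "s \<le> r"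
  shows "block_signed_perm r s (w \<circ> t)" "inversion_count r s (w \<circ> t) \<le> inversion_count r s w + 2"
proof -
  from assms(2) consider
    (short) a where "1 \<le> a" "a + 1 \<le> int r" "same_block s a (a + 1)" "t = refl_short a (a + 1)"
  | (long) a where "1 \<le> a" "a \<in> {int s, int r}" "t = refl_long a"
    unfolding simple_refls_def by auto
  then have "block_signed_perm r s (w \<circ> t) \<and> inversion_count r s (w \<circ> t) \<le> inversion_count r s w + 2"
  proof cases
    case short
    then show ?thesis
      using assms(1) block_signed_perm_comp block_signed_perm_refl_short
        inversion_count_comp_refl_short[OF assms(1) short(1-3)] by (auto split: if_splits)
  next
    case long
    have "a \<le> int r" using long(2) assms(3) by auto
    then show ?thesis
      using long assms(1) block_signed_perm_comp block_signed_perm_refl_long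
        inversion_count_comp_refl_long[OF assms(1) long(1) \<open>a \<le> int r\<close> long(2)]
      by (auto split: if_splits)
  qed
  then show "block_signed_perm r s (w \<circ> t)" "inversion_count r s (w \<circ> t) \<le> inversion_count r s w + 2"
    by auto
qed

lemma word_prod_simple_refls:
  assumes "set ws \<subseteq> simple_refls r s" "s \<le> r"
  shows "block_signed_perm r s (word_prod ws) \<and> inversion_count r s (word_prod ws) \<le> 2 * length ws"
  using assms(1)
proof (induction ws rule: rev_induct)
  case Nil
  then show ?case using block_signed_perm_id inversion_count_id by (simp add: word_prod_def id_def)
next
  case (snoc t ws)
  then have "block_signed_perm r s (word_prod ws)" "inversion_count r s (word_prod ws) \<le> 2 * length ws"
    "t \<in> simple_refls r s"
    by auto
  note step = inversion_count_comp_simple_refl[OF this(1,3) assms(2)]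
  have "inversion_count r s (word_prod ws \<circ> t) \<le> 2 * length (ws @ [t])"
    using step(2) \<open>inversion_count r s (word_prod ws) \<le> 2 * length ws\<close> by simp
  with step(1) show ?case unfolding word_prod_snoc by blast
qed

lemma block_signed_perm_increasing:
  assumes w: "block_signed_perm r s w" and "k \<le> s" "s < r"
    and ascent: "\<And>i. int k < i \<Longrightarrow> i < int r \<Longrightarrow> i \<noteq> int s \<Longrightarrow> pos_root (w i) (w (i + 1))"
    and top: "0 < w (int r)" "k < s \<Longrightarrow> 0 < w (int s)"
  shows block_signed_perm_increasing_pos: "int k < i \<Longrightarrow> i \<le> int r \<Longrightarrow> 0 < w i"
    and block_signed_perm_increasing_less: "int k < i \<Longrightarrow> i < j \<Longrightarrow> j \<le> int r \<Longrightarrow> w i < w j"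
proof -
  have lower: "0 < w i \<and> w i < w j" if "int k < i" "i < j" "j \<le> int s" for i j
    by (rule pos_root_chain_increasing[of "int k + 1" "int s" w]) (use ascent top that assms(3) in auto)
  have upper: "0 < w i \<and> w i < w j" if "int s < i" "i < j" "j \<le> int r" for i j
    by (rule pos_root_chain_increasing[of "int s + 1" "int r" w]) (use ascent top that assms(2) in auto)
  show pos: "0 < w i" if "int k < i" "i \<le> int r" for i
    using lower[of i "int s"] upper[of i "int r"] top that by (cases "i < int s"; cases "i = int s"; force)
  show "w i < w j" if "int k < i" "i < j" "j \<le> int r" for i j
  proof -
    consider "j \<le> int s" | "int s < i" | "i \<le> int s" "int s < j" by linarith
    then show ?thesis
    proof cases
      case 3
      have "i \<in> signed_range r" "j \<in> signed_range r" using that by (auto simp: signed_range_def)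
      moreover have "0 < w i" "0 < w j" using pos that 3 by auto
      ultimately show ?thesis
        using block_signed_perm_same_block[OF w, of i] block_signed_perm_same_block[OF w, of j] that 3 assms(2)
        by (auto simp: same_block_def)
    qed (use lower upper that in auto)
  qed
qed

lemma block_signed_perm_eq_id_if_ascending:
  assumes w: "block_signed_perm r s w" and "s < r"
    and ascent: "\<And>a. 1 \<le> a \<Longrightarrow> a < int r \<Longrightarrow> a \<noteq> int s \<Longrightarrow> pos_root (w a) (w (a + 1))"
    and top: "0 < w (int r)" "0 < s \<Longrightarrow> 0 < w (int s)"
  shows "w = id"
proof -
  note increasing_pos = block_signed_perm_increasing_pos[OF w le0 \<open>s < r\<close>]
    and increasing_less = block_signed_perm_increasing_less[OF w le0 \<open>s < r\<close>]
  have fixes_positive: "w i = i" if "1 \<le> i" "i \<le> int r" for i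
  proof (rule increasing_self_map_eq_id[of 1 "int r" w])
    show "w i < w j" if "1 \<le> i" "i < j" "j \<le> int r" for i j
      using increasing_less[of i j] ascent top that by auto
    show "1 \<le> w i \<and> w i \<le> int r" if "1 \<le> i" "i \<le> int r" for i
      using increasing_pos[of i] ascent top that block_signed_perm_in_range[OF w, of i]
      by (auto simp: signed_range_def)
  qed (use that in auto)
  show "w = id"
  proof
    fix x
    consider "x \<notin> signed_range r" | "0 < x" "x \<le> int r" | "0 < - x" "- x \<le> int r"
      by (force simp: signed_range_def)
    then show "w x = id x"
      using fixes_positive[of x] fixes_positive[of "- x"] block_signed_perm_fixes[OF w, of x]
        block_signed_perm_uminus[OF w, of "- x"] by cases auto
  qed
qed

lemma exists_word_simple_refls:
  assumes "block_signed_perm r s w" "s < r"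
  shows "\<exists>ws. set ws \<subseteq> simple_refls r s \<and> 2 * length ws = inversion_count r s w \<and> word_prod ws = w"
  using assms(1)
proof (induction "inversion_count r s w" arbitrary: w rule: less_induct)
  case less
  have descent: "\<exists>ws. set ws \<subseteq> simple_refls r s \<and> 2 * length ws = inversion_count r s w \<and> word_prod ws = w"
    if t: "t \<in> simple_refls r s" "t \<circ> t = id" "int (inversion_count r s (w \<circ> t)) = int (inversion_count r s w) - 2"
    for t
  proof -
    have "block_signed_perm r s (w \<circ> t)"
      using inversion_count_comp_simple_refl(1)[OF less.prems t(1)] assms(2) by simp
    moreover have "inversion_count r s (w \<circ> t) < inversion_count r s w" using t(3) by linarith
    ultimately obtain ws where ws: "set ws \<subseteq> simple_refls r s"
      "2 * length ws = inversion_count r s (w \<circ> t)" "word_prod ws = w \<circ> t"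
      using less.hyps by blast
    have "word_prod (ws @ [t]) = w" by (simp add: word_prod_snoc ws(3) comp_assoc t(2))
    with ws t show ?thesis by (intro exI[of _ "ws @ [t]"]) auto
  qed
  show ?case
  proof (cases "w = id")
    case True
    then show ?thesis by (intro exI[of _ "[]"]) (simp add: word_prod_def inversion_count_id)
  next
    case False
    then consider (short) a where "1 \<le> a" "a < int r" "a \<noteq> int s" "\<not> pos_root (w a) (w (a + 1))"
      | (long_r) "\<not> 0 < w (int r)" | (long_s) "0 < s" "\<not> 0 < w (int s)"
      using block_signed_perm_eq_id_if_ascending[OF less.prems assms(2)] by blast
    then show ?thesis
    proof cases
      case short
      then have "same_block s a (a + 1)" by (auto simp: same_block_def)
      with short have "refl_short a (a + 1) \<in> simple_refls r s" by (auto simp: simple_refls_def)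
      then show ?thesis
      proof (rule descent)
        show "int (inversion_count r s (w \<circ> refl_short a (a + 1))) = int (inversion_count r s w) - 2"
          using inversion_count_comp_refl_short[OF less.prems short(1)] short \<open>same_block s a (a + 1)\<close>
          by simp
      qed (use short refl_short_involution in auto)
    next
      case long_r
      have "refl_long (int r) \<in> simple_refls r s" using assms(2) by (auto simp: simple_refls_def)
      then show ?thesis
        by (rule descent[OF _ refl_long_involution])
          (use long_r assms(2) inversion_count_comp_refl_long[OF less.prems, of "int r"] in auto)
    next
      case long_s
      have "refl_long (int s) \<in> simple_refls r s" using long_s by (auto simp: simple_refls_def)
      then show ?thesis
        by (rule descent[OF _ refl_long_involution])
          (use long_s assms(2) inversion_count_comp_refl_long[OF less.prems, of "int s"] in auto)
    qed
  qed
qed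

lemma gen_group_simple_refls:
  assumes "s < r"
  shows "gen_group (simple_refls r s) = {w. block_signed_perm r s w}"
  using word_prod_simple_refls exists_word_simple_refls[OF _ assms] assms
  unfolding gen_group_def by fastforce

lemma word_length_simple_refls:
  assumes "block_signed_perm r s w" "s < r"
  shows "2 * word_length (simple_refls r s) w = inversion_count r s w"
proof -
  obtain ws where ws: "set ws \<subseteq> simple_refls r s" "2 * length ws = inversion_count r s w"
    "word_prod ws = w"
    using exists_word_simple_refls[OF assms] by blast
  have "word_length (simple_refls r s) w = length ws"
    by (rule word_length_eqI[OF ws(1,3)])
      (use ws(2) word_prod_simple_refls assms(2) in fastforce)
  then show ?thesis using ws(2) by simp
qed

lemma sref_eq_refl_short:
  assumes "1 \<le> a" "a < int r"
  shows "sref r (nat a) = refl_short a (a + 1)"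
proof -
  have "nat a < r" "int (nat a) = a" using assms by auto
  then show ?thesis by (simp add: sref_def)
qed

lemma sref_self: "sref r r = refl_long (int r)"
  by (simp add: sref_def)

lemma simple_G_eq: "simple_G r = simple_refls r 0"
proof
  show "simple_G r \<subseteq> simple_refls r 0"
    by (auto simp: simple_G_def simple_refls_def sref_def same_block_def)
  show "simple_refls r 0 \<subseteq> simple_G r"
  proof
    fix t assume "t \<in> simple_refls r 0"
    then consider a where "1 \<le> a" "a < int r" "t = refl_short a (a + 1)" | "1 \<le> r" "t = refl_long (int r)"
      unfolding simple_refls_def by auto
    then show "t \<in> simple_G r"
    proof cases
      case (1 a)
      then have "t = sref r (nat a)" "nat a \<in> {1..r}" using sref_eq_refl_short[of a r] by auto
      then show ?thesis unfolding simple_G_def by blast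
    next
      case 2
      then have "t = sref r r" "r \<in> {1..r}" using sref_self by auto
      then show ?thesis unfolding simple_G_def by blast
    qed
  qed
qed

lemma simple_M_eq:
  assumes "1 \<le> s" "s < r"
  shows "simple_M r s = simple_refls r s"
proof
  show "simple_M r s \<subseteq> simple_refls r s"
    using assms by (auto simp: simple_M_def simple_refls_def sref_def same_block_def)
  show "simple_refls r s \<subseteq> simple_M r s"
  proof
    fix t assume "t \<in> simple_refls r s"
    then consider a where "1 \<le> a" "a + 1 \<le> int r" "same_block s a (a + 1)" "t = refl_short a (a + 1)"
      | "t = refl_long (int s)" | "t = refl_long (int r)"
      unfolding simple_refls_def by blast
    then show "t \<in> simple_M r s"
    proof cases
      case (1 a)
      then have "a < int s \<or> int s < a" by (auto simp: same_block_def)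
      then show ?thesis
      proof
        assume "a < int s"
        then have "nat a \<in> {1..<s}" "t = refl_short (int (nat a)) (int (nat a) + 1)" using 1 by auto
        then show ?thesis unfolding simple_M_def by blast
      next
        assume "int s < a"
        then have "nat a \<in> {s + 1..r}" "t = sref r (nat a)" using 1 sref_eq_refl_short[of a r] by auto
        then show ?thesis unfolding simple_M_def by blast
      qed
    next
      case 2
      then show ?thesis unfolding simple_M_def by blast
    next
      case 3
      then have "t = sref r r" "r \<in> {s + 1..r}" using sref_self assms by auto
      then show ?thesis unfolding simple_M_def by blast
    qed
  qed
qed

lemma W_G_eq: "0 < r \<Longrightarrow> W_G r = {w. block_signed_perm r 0 w}"
  by (simp add: W_G_def simple_G_eq gen_group_simple_refls)

lemma W_M_eq: "1 \<le> s \<Longrightarrow> s < r \<Longrightarrow> W_M r s = {w. block_signed_perm r s w}"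
  by (simp add: W_M_def simple_M_eq gen_group_simple_refls)

lemma W_P_subset_W_G: "W_P r k \<subseteq> W_G r"
  unfolding W_P_def W_G_def simple_P_def simple_G_def by (rule gen_group_mono) auto

lemma sref_in_W_P: "i \<in> {1..r} \<Longrightarrow> i \<noteq> k \<Longrightarrow> sref r i \<in> W_P r k"
  unfolding W_P_def simple_P_def by (rule gen_group_gen) auto

lemma refl_long_in_W_P:
  assumes "int k < a" "a \<le> int r"
  shows "refl_long a \<in> W_P r k"
  using assms(2,1)
proof (induction a rule: int_le_induct)
  case base
  then show ?case using sref_in_W_P[of r r k] sref_self by simp
next
  case (step a)
  have "nat (a - 1) \<in> {1..r}" "nat (a - 1) \<noteq> k" using step.prems step.hyps by auto
  moreover have "refl_short (a - 1) a = sref r (nat (a - 1))"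
    using step.prems step.hyps sref_eq_refl_short[of "a - 1" r] by simp
  ultimately have "refl_short (a - 1) a \<in> W_P r k" using sref_in_W_P by simp
  moreover have "refl_long a \<in> W_P r k" using step.prems step.IH by simp
  moreover have "refl_long (a - 1) = refl_short (a - 1) a \<circ> refl_long a \<circ> refl_short (a - 1) a"
    using step.prems by (auto simp: refl_short_def refl_long_def)
  ultimately show ?case unfolding W_P_def by (metis gen_group_comp)
qed

lemma WMQ_reps_no_descent:
  assumes "w \<in> WMQ_reps r s k" "1 \<le> s" "s < r" "t \<in> simple_M r s" "t \<in> W_P r k"
  shows "inversion_count r s w \<le> inversion_count r s (w \<circ> t)"
proof -
  have w: "w \<in> W_M r s" and minimal: "\<And>u. u \<in> W_Q r s k \<Longrightarrow>
      word_length (simple_M r s) w \<le> word_length (simple_M r s) (w \<circ> u)"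
    using assms(1) unfolding WMQ_reps_def min_reps_def by auto
  have "t \<in> W_M r s" using assms(4) unfolding W_M_def by (rule gen_group_gen)
  then have "w \<circ> t \<in> W_M r s" "t \<in> W_Q r s k"
    using w assms(5) unfolding W_M_def W_Q_def by (auto intro: gen_group_comp)
  then show ?thesis
    using minimal[of t] word_length_simple_refls[of r s w] word_length_simple_refls[of r s "w \<circ> t"]
      w W_M_eq[OF assms(2,3)] simple_M_eq[OF assms(2,3)] assms(3)
    by auto
qed

lemma WMQ_reps_ascents:
  assumes "1 \<le> k" "k \<le> s" "s < r" and w: "w \<in> WMQ_reps r s k"
  shows "block_signed_perm r s w"
    and "\<And>a. 1 \<le> a \<Longrightarrow> a < int r \<Longrightarrow> a \<noteq> int k \<Longrightarrow> a \<noteq> int s \<Longrightarrow> pos_root (w a) (w (a + 1))"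
    and "0 < w (int r)"
    and "k < s \<Longrightarrow> 0 < w (int s)"
proof -
  have "1 \<le> s" using assms by simp
  show perm: "block_signed_perm r s w"
    using w W_M_eq[OF \<open>1 \<le> s\<close> \<open>s < r\<close>] by (auto simp: WMQ_reps_def min_reps_def)
  note no_descent = WMQ_reps_no_descent[OF w \<open>1 \<le> s\<close> \<open>s < r\<close>]
  have long_ascent: "0 < w a" if "a \<in> {int s, int r}" "int k < a" "a \<le> int r" for a
  proof (rule ccontr)
    assume "\<not> 0 < w a"
    moreover have "refl_long a \<in> simple_M r s" "refl_long a \<in> W_P r k"
      using that assms simple_M_eq[OF \<open>1 \<le> s\<close> \<open>s < r\<close>] refl_long_in_W_P
      by (auto simp: simple_refls_def)
    ultimately show False
      using no_descent inversion_count_comp_refl_long[OF perm _ that(3,1)] that(2) by fastforce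
  qed
  show "0 < w (int r)" "k < s \<Longrightarrow> 0 < w (int s)"
    using long_ascent assms by auto
  show "pos_root (w a) (w (a + 1))" if "1 \<le> a" "a < int r" "a \<noteq> int k" "a \<noteq> int s" for a
  proof (rule ccontr)
    assume "\<not> pos_root (w a) (w (a + 1))"
    moreover have "same_block s a (a + 1)" using that by (auto simp: same_block_def)
    moreover have "refl_short a (a + 1) \<in> simple_M r s"
      using that \<open>same_block s a (a + 1)\<close> simple_M_eq[OF \<open>1 \<le> s\<close> \<open>s < r\<close>]
      by (auto simp: simple_refls_def)
    moreover have "nat a \<in> {1..r}" "nat a \<noteq> k" using that by auto
    then have "refl_short a (a + 1) \<in> W_P r k"
      using sref_in_W_P sref_eq_refl_short[of a r] that by metis
    ultimately show False
      using no_descent inversion_count_comp_refl_short[OF perm that(1)] that(2) by fastforce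
  qed
qed

definition preserves_levi_roots :: "nat \<Rightarrow> nat \<Rightarrow> (int \<Rightarrow> int) \<Rightarrow> bool" where
  "preserves_levi_roots r k w \<longleftrightarrow>
     (\<forall>p q. 1 \<le> p \<and> p \<le> int k \<and> 1 \<le> q \<and> q \<le> int k \<longrightarrow> (pos_root (w p) (w q) \<longleftrightarrow> pos_root p q))
   \<and> (\<forall>p q. int k < \<bar>p\<bar> \<and> \<bar>p\<bar> \<le> int r \<and> int k < \<bar>q\<bar> \<and> \<bar>q\<bar> \<le> int r
          \<longrightarrow> (pos_root (w p) (w q) \<longleftrightarrow> pos_root p q))"

lemma pos_root_preserved_if_increasing:
  assumes odd: "\<And>x. w (- x) = - w x"
    and increasing: "\<And>i j. lo \<le> i \<Longrightarrow> i < j \<Longrightarrow> j \<le> hi \<Longrightarrow> w i < w j"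
    and positive: "\<And>i. lo \<le> i \<Longrightarrow> i \<le> hi \<Longrightarrow> 0 < w i" and "1 \<le> lo"
    and p: "lo \<le> \<bar>p\<bar>" "\<bar>p\<bar> \<le> hi" and q: "lo \<le> \<bar>q\<bar>" "\<bar>q\<bar> \<le> hi"
  shows "pos_root (w p) (w q) \<longleftrightarrow> pos_root p q"
proof -
  have sign: "w x = (if 0 < x then w \<bar>x\<bar> else - w \<bar>x\<bar>)" for x
    using odd[of "\<bar>x\<bar>"] by (cases "0 < x") auto
  have "w \<bar>p\<bar> < w \<bar>q\<bar> \<longleftrightarrow> \<bar>p\<bar> < \<bar>q\<bar>" "w \<bar>q\<bar> < w \<bar>p\<bar> \<longleftrightarrow> \<bar>q\<bar> < \<bar>p\<bar>"
    using increasing p q by (metis less_asym linorder_neqE_linordered_idom)+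
  moreover have "0 < w \<bar>p\<bar>" "0 < w \<bar>q\<bar>" "p \<noteq> 0" "q \<noteq> 0" using positive p q \<open>1 \<le> lo\<close> by auto
  ultimately show ?thesis
    unfolding pos_root_def sign[of p] sign[of q] by (cases "0 < p"; cases "0 < q") auto
qed

lemma pos_root_preserved_if_ascending:
  assumes "\<And>i. lo \<le> i \<Longrightarrow> i < hi \<Longrightarrow> pos_root (w i) (w (i + 1))"
    and "0 < lo" "lo \<le> p" "p \<le> hi" "lo \<le> q" "q \<le> hi"
  shows "pos_root (w p) (w q) \<longleftrightarrow> pos_root p q"
proof -
  consider "p < q" | "q < p" | "p = q" by linarith
  then show ?thesis
  proof cases
    case 1
    then have "pos_root (w p) (w q)" "pos_root p q"
      using assms pos_root_chain[of lo hi w p q] by (auto simp: pos_root_def)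
    then show ?thesis by simp
  next
    case 2
    then have "pos_root (w q) (w p)" "\<not> pos_root p q"
      using assms pos_root_chain[of lo hi w q p] by (auto simp: pos_root_def)
    then show ?thesis using pos_root_asym by blast
  qed (simp add: pos_root_irrefl)
qed

lemma preserves_levi_roots_if_increasing:
  assumes "\<And>x. w (- x) = - w x"
    and "\<And>a. 1 \<le> a \<Longrightarrow> a < int k \<Longrightarrow> pos_root (w a) (w (a + 1))"
    and "\<And>i j. int k < i \<Longrightarrow> i < j \<Longrightarrow> j \<le> int r \<Longrightarrow> w i < w j"
    and "\<And>i. int k < i \<Longrightarrow> i \<le> int r \<Longrightarrow> 0 < w i"
  shows "preserves_levi_roots r k w"
  unfolding preserves_levi_roots_def
  using pos_root_preserved_if_ascending[of 1 "int k" w] pos_root_preserved_if_increasing[of w "int k + 1" "int r"]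
    assms by auto

definition levi_perm :: "nat \<Rightarrow> nat \<Rightarrow> (int \<Rightarrow> int) \<Rightarrow> bool" where
  "levi_perm r k u \<longleftrightarrow> block_signed_perm r 0 u
     \<and> (\<forall>x. 1 \<le> x \<and> x \<le> int k \<longrightarrow> 1 \<le> u x \<and> u x \<le> int k)
     \<and> (\<forall>x. int k < \<bar>x\<bar> \<and> \<bar>x\<bar> \<le> int r \<longrightarrow> int k < \<bar>u x\<bar> \<and> \<bar>u x\<bar> \<le> int r)"

lemma levi_perm_id: "levi_perm r k id"
  by (simp add: levi_perm_def block_signed_perm_id)

lemma levi_perm_comp_refl_short:
  assumes "levi_perm r k u" "1 \<le> a" "a < int r" "a \<noteq> int k"
  shows "levi_perm r k (u \<circ> refl_short a (a + 1))"
proof -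
  have "block_signed_perm r 0 (u \<circ> refl_short a (a + 1))"
    using assms block_signed_perm_comp block_signed_perm_refl_short[of a r 0]
    by (auto simp: levi_perm_def same_block_def)
  then show ?thesis using assms unfolding levi_perm_def refl_short_def by auto
qed

lemma levi_perm_comp_refl_long:
  assumes "levi_perm r k u" "k < r"
  shows "levi_perm r k (u \<circ> refl_long (int r))"
proof -
  have "block_signed_perm r 0 (u \<circ> refl_long (int r))"
    using assms block_signed_perm_comp block_signed_perm_refl_long[of "int r" r 0]
    by (auto simp: levi_perm_def)
  then show ?thesis using assms unfolding levi_perm_def refl_long_def by auto
qed

text \<open>The generator \<open>t\<close> is an ascent of \<open>v\<close> iff it is one of \<open>w \<circ> v\<close>, since \<open>v\<close> maps the simple
  root of \<open>t\<close> to a root of the Levi factor; so both inversion counts move by the same \<open>\<plusminus>2\<close>.\<close>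
lemma inversion_count_comp_simple_P:
  assumes w: "block_signed_perm r 0 w" "preserves_levi_roots r k w" and "k < r"
    and v: "levi_perm r k v" and "t \<in> simple_P r k"
    and additive: "inversion_count r 0 (w \<circ> v) = inversion_count r 0 w + inversion_count r 0 v"
  shows "levi_perm r k (v \<circ> t)"
    and "inversion_count r 0 (w \<circ> v \<circ> t) = inversion_count r 0 w + inversion_count r 0 (v \<circ> t)"
proof -
  have v_perm: "block_signed_perm r 0 v" and wv: "block_signed_perm r 0 (w \<circ> v)"
    using v w(1) block_signed_perm_comp by (auto simp: levi_perm_def)
  obtain i where i: "i \<in> {1..r}" "i \<noteq> k" "t = sref r i"
    using \<open>t \<in> simple_P r k\<close> unfolding simple_P_def by blast
  have "levi_perm r k (v \<circ> t) \<and> (\<exists>d. int (inversion_count r 0 (w \<circ> v \<circ> t)) = int (inversion_count r 0 (w \<circ> v)) + d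
          \<and> int (inversion_count r 0 (v \<circ> t)) = int (inversion_count r 0 v) + d)"
  proof (cases "i < r")
    case True
    define a where "a = int i"
    have a: "1 \<le> a" "a < int r" "a \<noteq> int k" "same_block 0 a (a + 1)" and t: "t = refl_short a (a + 1)"
      using i True by (auto simp: a_def sref_def same_block_def)
    have "pos_root (w (v a)) (w (v (a + 1))) \<longleftrightarrow> pos_root (v a) (v (a + 1))"
      using v w(2) a \<open>k < r\<close> unfolding levi_perm_def preserves_levi_roots_def
      by (cases "a < int k") auto
    then show ?thesis
      using t levi_perm_comp_refl_short[OF v a(1-3)] a(2)
        inversion_count_comp_refl_short[OF wv a(1) _ a(4)] inversion_count_comp_refl_short[OF v_perm a(1) _ a(4)]
      by auto
  next
    case False
    then have t: "t = refl_long (int r)" using i by (simp add: sref_self)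
    have "int k < \<bar>v (int r)\<bar> \<and> \<bar>v (int r)\<bar> \<le> int r" using v \<open>k < r\<close> unfolding levi_perm_def by auto
    then have "pos_root (w (v (int r))) (w (- v (int r))) \<longleftrightarrow> pos_root (v (int r)) (- v (int r))"
      using w(2) unfolding preserves_levi_roots_def by simp
    then have "0 < w (v (int r)) \<longleftrightarrow> 0 < v (int r)"
      using block_signed_perm_uminus[OF w(1), of "v (int r)"] by (simp add: pos_root_uminus_right)
    then show ?thesis
      using t levi_perm_comp_refl_long[OF v \<open>k < r\<close>] \<open>k < r\<close>
        inversion_count_comp_refl_long[OF wv, of "int r"] inversion_count_comp_refl_long[OF v_perm, of "int r"]
      by auto
  qed
  then show "levi_perm r k (v \<circ> t)"
    and "inversion_count r 0 (w \<circ> v \<circ> t) = inversion_count r 0 w + inversion_count r 0 (v \<circ> t)"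
    using additive by auto
qed

lemma inversion_count_comp_W_P:
  assumes w: "block_signed_perm r 0 w" "preserves_levi_roots r k w" and "k < r"
    and "set ws \<subseteq> simple_P r k"
  shows "levi_perm r k (word_prod ws)
    \<and> inversion_count r 0 (w \<circ> word_prod ws) = inversion_count r 0 w + inversion_count r 0 (word_prod ws)"
  using \<open>set ws \<subseteq> simple_P r k\<close>
proof (induction ws rule: rev_induct)
  case Nil
  then show ?case using levi_perm_id inversion_count_id by (simp add: word_prod_def id_def)
next
  case (snoc t ws)
  have "set ws \<subseteq> simple_P r k" "t \<in> simple_P r k" using snoc.prems by auto
  with snoc.IH have "levi_perm r k (word_prod ws)" "t \<in> simple_P r k"
    "inversion_count r 0 (w \<circ> word_prod ws) = inversion_count r 0 w + inversion_count r 0 (word_prod ws)"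
    by blast+
  from inversion_count_comp_simple_P[OF w \<open>k < r\<close> this] show ?case
    unfolding word_prod_snoc comp_assoc[symmetric] by blast
qed

lemma WP_reps_if_preserves_levi_roots:
  assumes w: "block_signed_perm r 0 w" "preserves_levi_roots r k w" and "k < r"
  shows "w \<in> WP_reps r k"
proof -
  have "0 < r" using \<open>k < r\<close> by simp
  note length_G = word_length_simple_refls[OF _ \<open>0 < r\<close>, folded simple_G_eq]
  have "w \<in> W_G r" using w W_G_eq[OF \<open>0 < r\<close>] by simp
  moreover have "word_length (simple_G r) w \<le> word_length (simple_G r) (w \<circ> u)" if u: "u \<in> W_P r k" for u
  proof -
    obtain ws where ws: "set ws \<subseteq> simple_P r k" "word_prod ws = u"
      using u unfolding W_P_def gen_group_def by auto
    have "inversion_count r 0 (w \<circ> u) = inversion_count r 0 w + inversion_count r 0 u"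
      using inversion_count_comp_W_P[OF w \<open>k < r\<close> ws(1)] ws(2) by blast
    moreover have "block_signed_perm r 0 (w \<circ> u)"
      using u W_P_subset_W_G W_G_eq[OF \<open>0 < r\<close>] w(1) block_signed_perm_comp by blast
    ultimately show ?thesis using length_G[of w] length_G[of "w \<circ> u"] w(1) by simp
  qed
  ultimately show ?thesis unfolding WP_reps_def min_reps_def by blast
qed

theorem mainTheorem5:
  fixes r s k :: nat
  assumes "1 \<le> k" and "k \<le> s" and "s < r"
  shows "WMQ_reps r s k \<subseteq> WP_reps r k"
proof
  fix w assume "w \<in> WMQ_reps r s k"
  note ascents = WMQ_reps_ascents[OF assms this]
  have perm: "block_signed_perm r 0 w" using ascents(1) by (rule block_signed_perm_no_blocks)
  have "preserves_levi_roots r k w"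
  proof (rule preserves_levi_roots_if_increasing)
    show "w (- x) = - w x" for x using perm by (rule block_signed_perm_uminus)
    show "pos_root (w a) (w (a + 1))" if "1 \<le> a" "a < int k" for a
      using ascents(2) that assms by auto
    show "w i < w j" if "int k < i" "i < j" "j \<le> int r" for i j
      using block_signed_perm_increasing_less[OF ascents(1) \<open>k \<le> s\<close> \<open>s < r\<close>] ascents(2-4) that by auto
    show "0 < w i" if "int k < i" "i \<le> int r" for i
      using block_signed_perm_increasing_pos[OF ascents(1) \<open>k \<le> s\<close> \<open>s < r\<close>] ascents(2-4) that by auto
  qed
  then show "w \<in> WP_reps r k"
    using WP_reps_if_preserves_levi_roots[OF perm] assms by simp
qed

end
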